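(* Let $p$ be a prime, let $1\le m_1\le\cdots\le m_n$ be integers and $G=\mathbb{Z}_{p^{m_1}}\times\cdots\times\mathbb{Z}_{p^{m_n}}$, with $g_i$ a fixed generator of the $i$-th factor, so every element of $G$ is written $g_1^{s_1}\cdots g_n^{s_n}$ with $s_i\in\mathbb{Z}$. Let $A$ be a finite abelian $p$-group (written additively). Let $\Lambda=\{(i,j)\colon 1\le i<j\le n\}$, and for $\lambda=(i,j)\in\Lambda$ write $\dot\lambda=i$, $\ddot\lambda=j$. For $\mathbf{a}=(a_1,\ldots,a_n)\in A^n$ and $\mathbf{b}=(b_\lambda)_{\lambda\in\Lambda}\in A^\Lambda$ with $p^{m_{\dot\lambda}}b_\lambda=0$ for all $\lambda$, define $\alpha_{\mathbf{a},\mathbf{b}}\colon G\times G\to A$ by $$\alpha_{\mathbf{a},\mathbf{b}}(g_1^{s_1}\cdots g_n^{s_n},g_1^{t_1}\cdots g_n^{t_n})=\sum_{i=1}^n\Big[\frac{\langle s_i\rangle_{p^{m_i}}+\langle t_i\rangle_{p^{m_i}}}{p^{m_i}}\Big]a_i-\sum_{\lambda\in\Lambda}t_{\dot\lambda}s_{\ddot\lambda}b_\lambda .$$ Then each such $\alpha_{\mathbf{a},\mathbf{b}}$ is a $2$-cocycle, and every element of $H^2(G;A)$ is represented by $\alpha_{\mathbf{a},\mathbf{b}}$ for some $\mathbf{a}\in A^n$ and some $\mathbf{b}$ with $b_\lambda\in\ker(p^{m_{\dot\lambda}})$ for all $\lambda\in\Lambda$. For such $\mathbf{a},\mathbf{b}$,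 $[\alpha_{\mathbf{a},\mathbf{b}}]=0$ in $H^2(G;A)$ if and only if $a_i\in p^{m_i}A$ for all $i\in\{1,\ldots,n\}$ and $b_\lambda=0$ for all $\lambda\in\Lambda$. Consequently $[\alpha_{\mathbf{a},\mathbf{b}}]\mapsto\big((a_i+p^{m_i}A)_{i},(b_\lambda)_{\lambda}\big)$ gives an isomorphism $$H^2(G;A)\cong\prod_{i=1}^n A/p^{m_i}A\times\prod_{\lambda\in\Lambda}\ker\big(A\xrightarrow{\,p^{m_{\dot\lambda}}\,}A\big).$$
   Context: $[x]$ denotes the largest integer not exceeding $x$; for integers $q>0$ and $i$, $\langle i\rangle_q\in\{0,\ldots,q-1\}$ is the remainder of $i$ modulo $q$. $\ker(p^k)$ denotes the kernel of the endomorphism $a\mapsto p^ka$ of $A$. *)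

theory Defs
  imports "HOL-Computational_Algebra.Primes"
begin

primrec natmul :: "nat \<Rightarrow> 'a::monoid_add \<Rightarrow> 'a" where
  "natmul 0 a = 0"
| "natmul (Suc k) a = a + natmul k a"

text \<open>G = Z_{p^m_0} x ... x Z_{p^m_(n-1)}; the element g_0^{s_0}...g_(n-1)^{s_(n-1)}
  is encoded by its exponent vector s, with 0 <= s i < p^(m i) for i < n and s i = 0 else.\<close>
definition grp :: "nat \<Rightarrow> (nat \<Rightarrow> nat) \<Rightarrow> nat \<Rightarrow> (nat \<Rightarrow> nat) set" where
  "grp n m p = {s. (\<forall>i<n. s i < p ^ m i) \<and> (\<forall>i\<ge>n. s i = 0)}"

definition gmul :: "nat \<Rightarrow> (nat \<Rightarrow> nat) \<Rightarrow> nat \<Rightarrow> (nat \<Rightarrow> nat) \<Rightarrow> (nat \<Rightarrow> nat) \<Rightarrow> (nat \<Rightarrow> nat)" where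
  "gmul n m p s t = (\<lambda>i. if i < n then (s i + t i) mod p ^ m i else 0)"

definition cocycle2 :: "nat \<Rightarrow> (nat \<Rightarrow> nat) \<Rightarrow> nat \<Rightarrow> ((nat \<Rightarrow> nat) \<Rightarrow> (nat \<Rightarrow> nat) \<Rightarrow> 'a::ab_group_add) \<Rightarrow> bool" where
  "cocycle2 n m p f \<longleftrightarrow> (\<forall>g\<in>grp n m p. \<forall>h\<in>grp n m p. \<forall>k\<in>grp n m p.
      f h k - f (gmul n m p g h) k + f g (gmul n m p h k) - f g h = 0)"

definition coboundary2 :: "nat \<Rightarrow> (nat \<Rightarrow> nat) \<Rightarrow> nat \<Rightarrow> ((nat \<Rightarrow> nat) \<Rightarrow> (nat \<Rightarrow> nat) \<Rightarrow> 'a::ab_group_add) \<Rightarrow> bool" where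
  "coboundary2 n m p f \<longleftrightarrow> (\<exists>\<phi> :: (nat \<Rightarrow> nat) \<Rightarrow> 'a. \<forall>g\<in>grp n m p. \<forall>h\<in>grp n m p.
      f g h = \<phi> h - \<phi> (gmul n m p g h) + \<phi> g)"

definition cohomologous2 :: "nat \<Rightarrow> (nat \<Rightarrow> nat) \<Rightarrow> nat \<Rightarrow> ((nat \<Rightarrow> nat) \<Rightarrow> (nat \<Rightarrow> nat) \<Rightarrow> 'a::ab_group_add)
     \<Rightarrow> ((nat \<Rightarrow> nat) \<Rightarrow> (nat \<Rightarrow> nat) \<Rightarrow> 'a) \<Rightarrow> bool" where
  "cohomologous2 n m p f f' \<longleftrightarrow> coboundary2 n m p (\<lambda>g h. f g h - f' g h)"

text \<open>Lambda = {(i,j). i < j}, indices 0-based.\<close>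
definition Lam :: "nat \<Rightarrow> (nat \<times> nat) set" where
  "Lam n = {(i, j). i < j \<and> j < n}"

definition alpha :: "nat \<Rightarrow> (nat \<Rightarrow> nat) \<Rightarrow> nat \<Rightarrow> (nat \<Rightarrow> 'a::ab_group_add) \<Rightarrow> (nat \<times> nat \<Rightarrow> 'a)
     \<Rightarrow> (nat \<Rightarrow> nat) \<Rightarrow> (nat \<Rightarrow> nat) \<Rightarrow> 'a" where
  "alpha n m p a b s t =
     (\<Sum>i<n. natmul ((s i mod p ^ m i + t i mod p ^ m i) div p ^ m i) (a i))
     - (\<Sum>l\<in>Lam n. natmul (t (fst l) * s (snd l)) (b l))"

end

theory Submission
  imports Defs
begin

(*
  The carry term of alpha in coordinate i is the cocycle of the extension
  Z -> Z -> Z/p^(m i), and t_i s_j b is a cocycle because it is bilinear modulo p^(m i),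
  which kills b.  Conversely, a normalized cocycle f defines a central extension E of G
  by A.  Lifting the generators g_i to e_i in E, the powers e_i^(p^(m i)) = a_i and the
  commutators [e_j, e_i] = -b_ij are central, the latter killed by p^(m i); multiplying
  normal forms e_1^(s_1) ... e_n^(s_n) shows that f - alpha(a,b) is a coboundary.
  Finally, coboundaries are symmetric because G is abelian, which forces b = 0 since
  alpha(g_j, g_i) = -b_ij while alpha(g_i, g_j) = 0; and summing alpha(g_i^r, g_i) over
  r < p^(m i) gives a_i, whereas for a coboundary the sum telescopes to a multiple of p^(m i).
*)

lemma natmul_add_left: "natmul (x + y) a = natmul x a + natmul y a"
  by (induction x) (simp_all add: add.assoc)

lemma natmul_add_right: "natmul k (a + b) = natmul k a + natmul k (b :: 'a::comm_monoid_add)"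
  by (induction k) (simp_all add: algebra_simps)

lemma natmul_zero_right [simp]: "natmul k 0 = (0 :: 'a::monoid_add)"
  by (induction k) simp_all

lemma natmul_minus_right: "natmul k (- a) = - natmul k (a :: 'a::ab_group_add)"
  by (induction k) (simp_all add: algebra_simps)

lemma natmul_diff_right: "natmul k (a - b) = natmul k a - natmul k (b :: 'a::ab_group_add)"
  using natmul_add_right[of k a "- b"] by (simp add: natmul_minus_right)

lemma natmul_mult: "natmul (x * y) a = natmul x (natmul y a)"
  by (induction x) (simp_all add: natmul_add_left)

lemma natmul_eq_sum: "natmul k a = (\<Sum>i<k. a)"
  by (induction k) (simp_all add: add.commute)

lemma natmul_mod:
  assumes "natmul q a = 0"
  shows "natmul x a = natmul (x mod q) a"
proof -
  have "natmul x a = natmul (x div q * q) a + natmul (x mod q) a"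
    by (simp only: natmul_add_left[symmetric] div_mult_mod_eq)
  also have "natmul (x div q * q) a = 0"
    by (simp add: natmul_mult assms)
  finally show ?thesis by simp
qed

lemma natmul_div_mod:
  "natmul ((u + v) div q) (natmul q x) = natmul v x - natmul ((u + v) mod q) x + natmul u (x :: 'a::ab_group_add)"
proof -
  have "natmul u x + natmul v x = natmul ((u + v) div q) (natmul q x) + natmul ((u + v) mod q) x"
    by (simp only: natmul_add_left[symmetric] natmul_mult[symmetric] div_mult_mod_eq)
  then show ?thesis
    by (simp add: algebra_simps eq_diff_eq)
qed

lemma sum_natmul_carry:
  assumes "0 < q"
  shows "(\<Sum>r<q. natmul ((r + 1) div q) y) = y"
proof -
  obtain Q where q: "q = Suc Q"
    using assms gr0_implies_Suc by blast
  have "(\<Sum>r<Q. natmul ((r + 1) div q) y) = 0"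
    using q by (intro sum.neutral) simp
  then show ?thesis
    using q by simp
qed

lemma div_add_mod_right: "(x + y mod P) div P + y div P = (x + y) div (P::nat)"
  using div_add1_eq[of x y P] div_add1_eq[of x "y mod P" P] by simp

lemma carry_cocycle:
  "(y + z) div P + (x + (y + z) mod P) div P = ((x + y) mod P + z) div P + (x + y) div (P::nat)"
  using div_add_mod_right[of x "y + z" P] div_add_mod_right[of z "x + y" P]
  by (simp add: add_ac)

lemma bilinear_cocycle_mod:
  assumes "q dvd r"
  shows "(ki * hj + ((hi + ki) mod q) * gj) mod q = (ki * ((gj + hj) mod r) + hi * gj) mod (q::nat)"
proof -
  have "(ki * hj + ((hi + ki) mod q) * gj) mod q = (ki * hj + (hi + ki) * gj) mod q"
    by (metis mod_add_right_eq mod_mult_left_eq)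
  also have "ki * hj + (hi + ki) * gj = ki * (gj + hj) + hi * gj"
    by (simp add: algebra_simps)
  also have "(ki * (gj + hj) + hi * gj) mod q = (ki * ((gj + hj) mod r) + hi * gj) mod q"
    using mod_mod_cancel[OF assms] by (metis mod_add_left_eq mod_mult_right_eq)
  finally show ?thesis .
qed

lemma sum_Lam: "(\<Sum>l\<in>Lam k. g l) = (\<Sum>j<k. \<Sum>i<j. g (i, j))"
proof -
  have "Lam k = prod.swap ` (SIGMA j:{..<k}. {..<j})"
    by (force simp: Lam_def)
  then show ?thesis
    by (simp add: sum.reindex sum.Sigma split_beta) (simp add: prod.swap_def)
qed

lemma finite_Lam [simp]: "finite (Lam n)"
  by (rule finite_subset[of _ "{..<n} \<times> {..<n}"]) (auto simp: Lam_def)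

lemma grp_mod [simp]: "s \<in> grp n m p \<Longrightarrow> s i mod p ^ m i = s i"
  by (cases "i < n") (auto simp: grp_def)

lemma gmul_comm: "gmul n m p s t = gmul n m p t s"
  by (auto simp: gmul_def add.commute)

lemma gmul_assoc: "gmul n m p (gmul n m p s t) u = gmul n m p s (gmul n m p t u)"
  by (auto simp: gmul_def mod_add_left_eq mod_add_right_eq add.assoc)

section \<open>The cocycles \<open>alpha\<close>\<close>

definition delta2 :: "nat \<Rightarrow> (nat \<Rightarrow> nat) \<Rightarrow> nat \<Rightarrow> ((nat \<Rightarrow> nat) \<Rightarrow> (nat \<Rightarrow> nat) \<Rightarrow> 'a::ab_group_add)
    \<Rightarrow> (nat \<Rightarrow> nat) \<Rightarrow> (nat \<Rightarrow> nat) \<Rightarrow> (nat \<Rightarrow> nat) \<Rightarrow> 'a" where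
  "delta2 n m p f g h k = f h k - f (gmul n m p g h) k + f g (gmul n m p h k) - f g h"

lemma cocycle2_iff_delta2:
  "cocycle2 n m p f \<longleftrightarrow>
     (\<forall>g\<in>grp n m p. \<forall>h\<in>grp n m p. \<forall>k\<in>grp n m p. delta2 n m p f g h k = 0)"
  by (simp add: cocycle2_def delta2_def)

lemma cocycle2_diff:
  assumes "cocycle2 n m p f1" and "cocycle2 n m p f2"
  shows "cocycle2 n m p (\<lambda>s t. f1 s t - f2 s t)"
proof -
  have "delta2 n m p (\<lambda>s t. f1 s t - f2 s t) g h k = delta2 n m p f1 g h k - delta2 n m p f2 g h k"
    for g h k
    by (simp add: delta2_def algebra_simps)
  with assms show ?thesis
    by (simp add: cocycle2_iff_delta2)
qed

lemma cocycle2_sum: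
  assumes "\<And>i. i \<in> I \<Longrightarrow> cocycle2 n m p (f i)"
  shows "cocycle2 n m p (\<lambda>s t. \<Sum>i\<in>I. f i s t)"
proof -
  have "delta2 n m p (\<lambda>s t. \<Sum>i\<in>I. f i s t) g h k = (\<Sum>i\<in>I. delta2 n m p (f i) g h k)" for g h k
    by (simp add: delta2_def sum.distrib sum_subtractf)
  with assms show ?thesis
    by (simp add: cocycle2_iff_delta2)
qed

text \<open>Here \<open>c\<close> need only be a cocycle modulo \<open>q\<close>; \<open>q = 0\<close> covers genuine \<open>\<nat>\<close>-valued cocycles.\<close>

lemma cocycle2_natmul:
  assumes "natmul q a = 0"
    and "\<And>g h k. g \<in> grp n m p \<Longrightarrow> h \<in> grp n m p \<Longrightarrow> k \<in> grp n m p \<Longrightarrow>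
      (c h k + c g (gmul n m p h k)) mod q = (c (gmul n m p g h) k + c g h) mod q"
  shows "cocycle2 n m p (\<lambda>s t. natmul (c s t) a)"
  unfolding cocycle2_iff_delta2 delta2_def
proof (intro ballI)
  fix g h k assume "g \<in> grp n m p" "h \<in> grp n m p" "k \<in> grp n m p"
  then have "natmul (c h k + c g (gmul n m p h k)) a = natmul (c (gmul n m p g h) k + c g h) a"
    using assms by (metis natmul_mod)
  then show "natmul (c h k) a - natmul (c (gmul n m p g h) k) a + natmul (c g (gmul n m p h k)) a
      - natmul (c g h) a = 0"
    by (simp add: natmul_add_left algebra_simps)
qed

lemma cocycle2_carry:
  assumes "i < n"
  shows "cocycle2 n m p (\<lambda>s t. natmul ((s i mod p ^ m i + t i mod p ^ m i) div p ^ m i) a)"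
  by (rule cocycle2_natmul[where q = 0]) (simp_all add: gmul_def assms carry_cocycle)

lemma cocycle2_bilinear:
  assumes "i < n" "j < n" "p ^ m i dvd p ^ m j" "natmul (p ^ m i) b = 0"
  shows "cocycle2 n m p (\<lambda>s t. natmul (t i * s j) b)"
  by (rule cocycle2_natmul[OF assms(4)]) (simp add: gmul_def assms bilinear_cocycle_mod[OF assms(3)])

lemma cocycle2_alpha:
  assumes mono: "\<And>i j. i \<le> j \<Longrightarrow> j < n \<Longrightarrow> m i \<le> m j"
    and b: "\<And>l. l \<in> Lam n \<Longrightarrow> natmul (p ^ m (fst l)) (b l) = 0"
  shows "cocycle2 n m p (alpha n m p a b)"
proof -
  have "cocycle2 n m p (\<lambda>s t. \<Sum>i<n. natmul ((s i mod p ^ m i + t i mod p ^ m i) div p ^ m i) (a i))"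
    by (intro cocycle2_sum cocycle2_carry) simp
  moreover have "cocycle2 n m p (\<lambda>s t. \<Sum>l\<in>Lam n. natmul (t (fst l) * s (snd l)) (b l))"
  proof (intro cocycle2_sum)
    fix l assume l: "l \<in> Lam n"
    then obtain i j where "l = (i, j)" "i < j" "j < n"
      by (auto simp: Lam_def)
    with b[OF l] show "cocycle2 n m p (\<lambda>s t. natmul (t (fst l) * s (snd l)) (b l))"
      by (auto intro!: cocycle2_bilinear le_imp_power_dvd mono)
  qed
  ultimately show ?thesis
    unfolding alpha_def[abs_def] by (rule cocycle2_diff)
qed

lemma alpha_add:
  "alpha n m p (\<lambda>i. a i + a' i) (\<lambda>l. b l + b' l) s t = alpha n m p a b s t + alpha n m p a' b' s t"
  by (simp add: alpha_def natmul_add_right sum.distrib)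

lemma alpha_diff:
  "alpha n m p (\<lambda>i. a i - a' i) (\<lambda>l. b l - b' l) s t = alpha n m p a b s t - alpha n m p a' b' s t"
  by (simp add: alpha_def natmul_diff_right sum_subtractf)

section \<open>Coboundaries among the \<open>alpha\<close>\<close>

lemma coboundary2_add:
  assumes "coboundary2 n m p f1" and "coboundary2 n m p f2"
  shows "coboundary2 n m p (\<lambda>s t. f1 s t + f2 s t)"
proof -
  obtain \<phi>1 \<phi>2 where
    \<phi>1: "\<forall>g\<in>grp n m p. \<forall>h\<in>grp n m p. f1 g h = \<phi>1 h - \<phi>1 (gmul n m p g h) + \<phi>1 g" and
    \<phi>2: "\<forall>g\<in>grp n m p. \<forall>h\<in>grp n m p. f2 g h = \<phi>2 h - \<phi>2 (gmul n m p g h) + \<phi>2 g"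
    using assms by (auto simp: coboundary2_def)
  show ?thesis
    unfolding coboundary2_def
  proof (intro exI[of _ "\<lambda>s. \<phi>1 s + \<phi>2 s"] ballI)
    fix g h assume "g \<in> grp n m p" "h \<in> grp n m p"
    then have f1: "f1 g h = \<phi>1 h - \<phi>1 (gmul n m p g h) + \<phi>1 g"
      and f2: "f2 g h = \<phi>2 h - \<phi>2 (gmul n m p g h) + \<phi>2 g"
      using \<phi>1 \<phi>2 by blast+
    show "f1 g h + f2 g h
        = \<phi>1 h + \<phi>2 h - (\<phi>1 (gmul n m p g h) + \<phi>2 (gmul n m p g h)) + (\<phi>1 g + \<phi>2 g)"
      unfolding f1 f2 by (simp add: algebra_simps)
  qed
qed

lemma coboundary2_const: "coboundary2 n m p (\<lambda>_ _. c)"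
  unfolding coboundary2_def by (intro exI[of _ "\<lambda>_. c"]) simp

lemma coboundary2_symmetric:
  assumes "coboundary2 n m p f" "g \<in> grp n m p" "h \<in> grp n m p"
  shows "f g h = f h g"
proof -
  obtain \<phi> where \<phi>: "\<forall>g\<in>grp n m p. \<forall>h\<in>grp n m p. f g h = \<phi> h - \<phi> (gmul n m p g h) + \<phi> g"
    using assms(1) by (auto simp: coboundary2_def)
  then have "f g h = \<phi> h - \<phi> (gmul n m p g h) + \<phi> g" "f h g = \<phi> g - \<phi> (gmul n m p h g) + \<phi> h"
    using assms(2,3) by blast+
  then show ?thesis
    by (simp add: gmul_comm[of n m p h g])
qed

text \<open>Summing a coboundary along a cycle \<open>x 0, x 0 g, \<dots>, x 0 g\<^sup>q = x 0\<close> telescopes.\<close>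

lemma coboundary2_sum_cycle:
  assumes "coboundary2 n m p f" "g \<in> grp n m p" "\<And>r. r < q \<Longrightarrow> x r \<in> grp n m p"
    and "\<And>r. x (Suc r) = gmul n m p (x r) g" "x q = x 0"
  shows "\<exists>y. (\<Sum>r<q. f (x r) g) = natmul q y"
proof -
  obtain \<phi> where \<phi>: "\<forall>g\<in>grp n m p. \<forall>h\<in>grp n m p. f g h = \<phi> h - \<phi> (gmul n m p g h) + \<phi> g"
    using assms(1) by (auto simp: coboundary2_def)
  have "(\<Sum>r<q. f (x r) g) = (\<Sum>r<q. \<phi> g - (\<phi> (x (Suc r)) - \<phi> (x r)))"
    using assms(2-4) \<phi> by (intro sum.cong) auto
  also have "\<dots> = natmul q (\<phi> g) - (\<phi> (x q) - \<phi> (x 0))"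
    by (simp only: sum_subtractf[of "\<lambda>_. \<phi> g"] sum_lessThan_telescope[of "\<lambda>r. \<phi> (x r)"] natmul_eq_sum)
  also have "\<dots> = natmul q (\<phi> g)"
    using assms(5) by simp
  finally show ?thesis ..
qed

lemma coboundary2_alphaI:
  assumes "\<And>i. i < n \<Longrightarrow> a i = natmul (p ^ m i) (x i)" and "\<And>l. l \<in> Lam n \<Longrightarrow> b l = 0"
  shows "coboundary2 n m p (alpha n m p a b)"
  unfolding coboundary2_def
proof (intro exI[of _ "\<lambda>s. \<Sum>i<n. natmul (s i) (x i)"] ballI)
  fix g h assume "g \<in> grp n m p" "h \<in> grp n m p"
  then have "alpha n m p a b g h = (\<Sum>i<n. natmul ((g i + h i) div p ^ m i) (natmul (p ^ m i) (x i)))"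
    using assms by (simp add: alpha_def)
  also have "\<dots> = (\<Sum>i<n. natmul (h i) (x i) - natmul (gmul n m p g h i) (x i) + natmul (g i) (x i))"
    by (intro sum.cong) (simp_all add: natmul_div_mod gmul_def)
  finally show "alpha n m p a b g h = (\<Sum>i<n. natmul (h i) (x i))
      - (\<Sum>i<n. natmul (gmul n m p g h i) (x i)) + (\<Sum>i<n. natmul (g i) (x i))"
    by (simp add: sum.distrib sum_subtractf)
qed

locale cyclic_product =
  fixes n :: nat and m :: "nat \<Rightarrow> nat" and p :: nat
  assumes order_gt_1: "i < n \<Longrightarrow> 1 < p ^ m i"
begin

abbreviation G where "G \<equiv> grp n m p"
abbreviation gm where "gm \<equiv> gmul n m p"

lemma order_pos: "i < n \<Longrightarrow> 0 < p ^ m i"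
  using order_gt_1[of i] by linarith

lemma zero_in_grp [simp]: "(\<lambda>_. 0) \<in> G"
  using order_pos by (simp add: grp_def)

lemma gmul_closed [simp]: "gm s t \<in> G"
  using order_pos by (simp add: grp_def gmul_def)

lemma gmul_zero_left [simp]: "s \<in> G \<Longrightarrow> gm (\<lambda>_. 0) s = s"
  by (auto simp: gmul_def grp_def)

lemma gmul_zero_right [simp]: "s \<in> G \<Longrightarrow> gm s (\<lambda>_. 0) = s"
  by (auto simp: gmul_def grp_def)

definition gen_pow :: "nat \<Rightarrow> nat \<Rightarrow> nat \<Rightarrow> nat" where
  "gen_pow i r = (\<lambda>j. if j = i then r mod p ^ m i else 0)"

lemma gen_pow_in_grp [simp]: "i < n \<Longrightarrow> gen_pow i r \<in> G"
  using order_pos by (auto simp: gen_pow_def grp_def)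

lemma gen_pow_one: "i < n \<Longrightarrow> gen_pow i 1 = (\<lambda>j. if j = i then 1 else 0)"
  using mod_less[OF order_gt_1] by (auto simp: gen_pow_def)

lemma gmul_gen_pow: "i < n \<Longrightarrow> gm (gen_pow i r) (gen_pow i r') = gen_pow i (r + r')"
  by (auto simp: gen_pow_def gmul_def mod_add_eq)

lemma gen_pow_zero [simp]: "gen_pow i 0 = (\<lambda>_. 0)"
  by (rule ext) (simp add: gen_pow_def)

lemma gen_pow_order [simp]: "gen_pow i (p ^ m i) = (\<lambda>_. 0)"
  by (rule ext) (simp add: gen_pow_def)

lemma alpha_gen_pow_same:
  assumes "i < n"
  shows "alpha n m p a b (gen_pow i r) (gen_pow i r')
    = natmul ((r mod p ^ m i + r' mod p ^ m i) div p ^ m i) (a i)"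
proof -
  have "(\<Sum>k<n. natmul ((gen_pow i r k mod p ^ m k + gen_pow i r' k mod p ^ m k) div p ^ m k) (a k))
      = (\<Sum>k<n. if k = i then natmul ((r mod p ^ m i + r' mod p ^ m i) div p ^ m i) (a i) else 0)"
    by (intro sum.cong) (auto simp: gen_pow_def)
  moreover have "(\<Sum>l\<in>Lam n. natmul (gen_pow i r' (fst l) * gen_pow i r (snd l)) (b l)) = 0"
    by (intro sum.neutral) (auto simp: Lam_def gen_pow_def)
  ultimately show ?thesis
    using assms by (simp add: alpha_def)
qed

lemma alpha_gen_pow_distinct:
  assumes "i < n" "j < n" "i \<noteq> j"
  shows "alpha n m p a b (gen_pow i 1) (gen_pow j 1) = (if j < i then - b (j, i) else 0)"
proof -
  have "(\<Sum>k<n. natmul ((gen_pow i 1 k mod p ^ m k + gen_pow j 1 k mod p ^ m k) div p ^ m k) (a k)) = 0"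
  proof (intro sum.neutral ballI)
    fix k assume "k \<in> {..<n}"
    then have "(gen_pow i 1 k mod p ^ m k + gen_pow j 1 k mod p ^ m k) div p ^ m k = 0"
      using assms order_pos by (intro div_less) (auto simp: gen_pow_def)
    then show "natmul ((gen_pow i 1 k mod p ^ m k + gen_pow j 1 k mod p ^ m k) div p ^ m k) (a k) = 0"
      by simp
  qed
  moreover have "(\<Sum>l\<in>Lam n. natmul (gen_pow j 1 (fst l) * gen_pow i 1 (snd l)) (b l))
      = (\<Sum>l\<in>Lam n. if l = (j, i) then b l else 0)"
    unfolding gen_pow_one[OF assms(1)] gen_pow_one[OF assms(2)]
    using assms by (intro sum.cong) auto
  moreover have "(j, i) \<in> Lam n \<longleftrightarrow> j < i"
    using assms by (auto simp: Lam_def)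
  ultimately show ?thesis
    by (simp add: alpha_def)
qed

lemma coboundary2_alphaD:
  assumes cob: "coboundary2 n m p (alpha n m p a b)"
  shows "(\<forall>i<n. \<exists>x. a i = natmul (p ^ m i) x) \<and> (\<forall>l\<in>Lam n. b l = 0)"
proof (intro conjI allI impI ballI)
  fix i assume i: "i < n"
  have "a i = (\<Sum>r<p ^ m i. natmul ((r + 1) div p ^ m i) (a i))"
    by (rule sum_natmul_carry[OF order_pos[OF i], symmetric])
  also have "\<dots> = (\<Sum>r<p ^ m i. alpha n m p a b (gen_pow i r) (gen_pow i 1))"
  proof (intro sum.cong)
    fix r assume "r \<in> {..<p ^ m i}"
    then show "natmul ((r + 1) div p ^ m i) (a i) = alpha n m p a b (gen_pow i r) (gen_pow i 1)"
      by (simp only: alpha_gen_pow_same[OF i] mod_less[OF order_gt_1[OF i]] mod_less lessThan_iff)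
  qed simp
  finally have "a i = (\<Sum>r<p ^ m i. alpha n m p a b (gen_pow i r) (gen_pow i 1))" .
  moreover have "\<exists>x. (\<Sum>r<p ^ m i. alpha n m p a b (gen_pow i r) (gen_pow i 1)) = natmul (p ^ m i) x"
    using i by (intro coboundary2_sum_cycle[OF cob]) (simp_all add: gmul_gen_pow)
  ultimately show "\<exists>x. a i = natmul (p ^ m i) x"
    by simp
next
  fix l assume "l \<in> Lam n"
  then obtain i j where l: "l = (i, j)" and ij: "i < j" "j < n"
    by (auto simp: Lam_def)
  have "- b (i, j) = alpha n m p a b (gen_pow j 1) (gen_pow i 1)"
    using ij alpha_gen_pow_distinct[of j i a b] by simp
  also have "\<dots> = alpha n m p a b (gen_pow i 1) (gen_pow j 1)"
    using ij by (intro coboundary2_symmetric[OF cob]) simp_all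
  also have "\<dots> = 0"
    using ij alpha_gen_pow_distinct[of i j a b] by simp
  finally show "b l = 0"
    using l by simp
qed

lemma coboundary2_alpha_iff:
  "coboundary2 n m p (alpha n m p a b)
    \<longleftrightarrow> (\<forall>i<n. \<exists>x. a i = natmul (p ^ m i) x) \<and> (\<forall>l\<in>Lam n. b l = 0)"
proof
  assume "(\<forall>i<n. \<exists>x. a i = natmul (p ^ m i) x) \<and> (\<forall>l\<in>Lam n. b l = 0)"
  moreover from this obtain x where "\<And>i. i < n \<Longrightarrow> a i = natmul (p ^ m i) (x i)"
    by metis
  ultimately show "coboundary2 n m p (alpha n m p a b)"
    by (intro coboundary2_alphaI) auto
qed (rule coboundary2_alphaD)

lemma cohomologous2_alpha_iff:
  "cohomologous2 n m p (alpha n m p a b) (alpha n m p a' b')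
    \<longleftrightarrow> (\<forall>i<n. \<exists>x. a i - a' i = natmul (p ^ m i) x) \<and> (\<forall>l\<in>Lam n. b l = b' l)"
  by (simp add: cohomologous2_def alpha_diff[symmetric] coboundary2_alpha_iff)

end

section \<open>The central extension of a normalized cocycle\<close>

locale normalized_cocycle = cyclic_product +
  fixes f :: "(nat \<Rightarrow> nat) \<Rightarrow> (nat \<Rightarrow> nat) \<Rightarrow> 'a::ab_group_add"
  assumes cocycle: "cocycle2 n m p f"
    and f_zero_left: "k \<in> grp n m p \<Longrightarrow> f (\<lambda>_. 0) k = 0"
    and f_zero_right: "g \<in> grp n m p \<Longrightarrow> f g (\<lambda>_. 0) = 0"
begin

definition E :: "('a \<times> (nat \<Rightarrow> nat)) set" where
  "E = {x. snd x \<in> G}"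

definition ext_mul :: "'a \<times> (nat \<Rightarrow> nat) \<Rightarrow> 'a \<times> (nat \<Rightarrow> nat) \<Rightarrow> 'a \<times> (nat \<Rightarrow> nat)"
    (infixl "\<odot>" 70) where
  "x \<odot> y = (fst x + fst y + f (snd x) (snd y), gm (snd x) (snd y))"

definition central :: "'a \<Rightarrow> 'a \<times> (nat \<Rightarrow> nat)" where
  "central c = (c, (\<lambda>_. 0))"

definition ext_pow :: "'a \<times> (nat \<Rightarrow> nat) \<Rightarrow> nat \<Rightarrow> 'a \<times> (nat \<Rightarrow> nat)" where
  "ext_pow x k = ((\<lambda>y. y \<odot> x) ^^ k) (central 0)"

definition lift :: "nat \<Rightarrow> 'a \<times> (nat \<Rightarrow> nat)" where
  "lift i = (0, gen_pow i 1)"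

lemma ext_mul_in_E [simp]: "x \<odot> y \<in> E"
  by (simp add: E_def ext_mul_def)

lemma central_in_E [simp]: "central c \<in> E"
  by (simp add: E_def central_def)

lemma ext_pow_0 [simp]: "ext_pow x 0 = central 0"
  by (simp add: ext_pow_def)

lemma ext_pow_Suc [simp]: "ext_pow x (Suc k) = ext_pow x k \<odot> x"
  by (simp add: ext_pow_def)

lemma ext_pow_in_E [simp]: "ext_pow x k \<in> E"
  by (cases k) simp_all

lemma lift_in_E [simp]: "i < n \<Longrightarrow> lift i \<in> E"
  by (simp add: E_def lift_def)

lemma fst_ext_mul: "fst (x \<odot> y) = fst x + fst y + f (snd x) (snd y)"
  by (simp add: ext_mul_def)

lemma snd_ext_mul [simp]: "snd (x \<odot> y) = gm (snd x) (snd y)"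
  by (simp add: ext_mul_def)

lemma ext_mul_assoc:
  assumes "x \<in> E" "y \<in> E" "z \<in> E"
  shows "x \<odot> (y \<odot> z) = x \<odot> y \<odot> z"
proof -
  have "delta2 n m p f (snd x) (snd y) (snd z) = 0"
    using cocycle assms by (simp add: cocycle2_iff_delta2 E_def)
  then show ?thesis
    by (simp add: ext_mul_def delta2_def gmul_assoc algebra_simps)
qed

lemma central_mul: "y \<in> E \<Longrightarrow> central c \<odot> y = (c + fst y, snd y)"
  by (simp add: ext_mul_def central_def E_def f_zero_left)

lemma mul_central: "y \<in> E \<Longrightarrow> y \<odot> central c = (fst y + c, snd y)"
  by (simp add: ext_mul_def central_def E_def f_zero_right)

lemma mul_central_zero [simp]: "y \<in> E \<Longrightarrow> y \<odot> central 0 = y"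
  by (simp add: mul_central)

lemma central_zero_mul [simp]: "y \<in> E \<Longrightarrow> central 0 \<odot> y = y"
  by (simp add: central_mul)

lemma central_commute: "y \<in> E \<Longrightarrow> central c \<odot> y = y \<odot> central c"
  by (simp add: central_mul mul_central add.commute)

lemma central_mul_central: "central c \<odot> central d = central (c + d)"
  by (simp add: mul_central) (simp add: central_def)

lemma mul_central_commute: "y \<in> E \<Longrightarrow> z \<in> E \<Longrightarrow> y \<odot> central c \<odot> z = y \<odot> z \<odot> central c"
  by (simp add: ext_mul_assoc[symmetric] central_commute)

lemma mul_central_central: "y \<in> E \<Longrightarrow> y \<odot> central c \<odot> central d = y \<odot> central (c + d)"
  by (simp add: ext_mul_assoc[symmetric] central_mul_central)

lemma mul_central_mul_central:
  "x \<in> E \<Longrightarrow> y \<in> E \<Longrightarrow> (x \<odot> central c) \<odot> (y \<odot> central d) = x \<odot> y \<odot> central (c + d)"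
  by (simp add: mul_central) (simp add: ext_mul_def algebra_simps)

lemma eq_mul_central: "x \<in> E \<Longrightarrow> y \<in> E \<Longrightarrow> snd x = snd y \<Longrightarrow> x = y \<odot> central (fst x - fst y)"
  by (simp add: mul_central prod_eq_iff)

lemma mul_central_eq_self: "x \<in> E \<Longrightarrow> x \<odot> central c = x \<Longrightarrow> c = 0"
  by (simp add: mul_central prod_eq_iff)

lemma ext_pow_add: "x \<in> E \<Longrightarrow> ext_pow x k \<odot> ext_pow x l = ext_pow x (k + l)"
  by (induction l) (simp_all add: ext_mul_assoc)

lemma ext_pow_mult: "x \<in> E \<Longrightarrow> ext_pow (ext_pow x k) l = ext_pow x (k * l)"
  by (induction l) (simp_all add: ext_pow_add add.commute)

lemma ext_pow_central: "ext_pow (central c) k = central (natmul k c)"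
  by (induction k) (simp_all add: central_mul_central add.commute)

lemma commutator_pow_right:
  assumes u: "u \<in> E" and v: "v \<in> E" and uv: "u \<odot> v = v \<odot> u \<odot> central c"
  shows "u \<odot> ext_pow v t = ext_pow v t \<odot> u \<odot> central (natmul t c)"
proof (induction t)
  case (Suc t)
  let ?V = "ext_pow v t"
  have "u \<odot> ext_pow v (Suc t) = u \<odot> ?V \<odot> v"
    using u v by (simp add: ext_mul_assoc)
  also have "\<dots> = ?V \<odot> u \<odot> central (natmul t c) \<odot> v"
    using Suc by simp
  also have "\<dots> = ?V \<odot> (u \<odot> v) \<odot> central (natmul t c)"
    using u v by (simp add: mul_central_commute ext_mul_assoc)
  also have "\<dots> = ?V \<odot> v \<odot> u \<odot> central c \<odot> central (natmul t c)"
    using u v by (simp add: uv ext_mul_assoc)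
  also have "\<dots> = ext_pow v (Suc t) \<odot> u \<odot> central (natmul (Suc t) c)"
    using u v by (simp add: mul_central_central)
  finally show ?case .
qed (use u in simp)

lemma commutator_pow:
  assumes u: "u \<in> E" and v: "v \<in> E" and uv: "u \<odot> v = v \<odot> u \<odot> central c"
  shows "ext_pow u s \<odot> ext_pow v t = ext_pow v t \<odot> ext_pow u s \<odot> central (natmul (s * t) c)"
proof (induction s)
  case (Suc s)
  let ?V = "ext_pow v t" and ?U = "ext_pow u s"
  have "ext_pow u (Suc s) \<odot> ?V = ?U \<odot> (u \<odot> ?V)"
    using u v by (simp add: ext_mul_assoc)
  also have "\<dots> = ?U \<odot> ?V \<odot> u \<odot> central (natmul t c)"
    using u v by (simp add: commutator_pow_right[OF u v uv] ext_mul_assoc)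
  also have "\<dots> = ?V \<odot> ?U \<odot> central (natmul (s * t) c) \<odot> u \<odot> central (natmul t c)"
    using Suc by simp
  also have "?V \<odot> ?U \<odot> central (natmul (s * t) c) \<odot> u = ?V \<odot> ?U \<odot> u \<odot> central (natmul (s * t) c)"
    using u v by (intro mul_central_commute) simp_all
  also have "\<dots> \<odot> central (natmul t c) = ?V \<odot> ext_pow u (Suc s) \<odot> central (natmul (Suc s * t) c)"
    using u v by (simp add: mul_central_central ext_mul_assoc natmul_add_left add.commute)
  finally show ?case .
qed (use v in simp)

lemma snd_lift_pow: "i < n \<Longrightarrow> snd (ext_pow (lift i) r) = gen_pow i r"
  by (induction r) (simp_all add: central_def lift_def gmul_gen_pow)

definition lift_period :: "nat \<Rightarrow> 'a" where
  "lift_period i = fst (ext_pow (lift i) (p ^ m i))"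

lemma lift_pow_order: "i < n \<Longrightarrow> ext_pow (lift i) (p ^ m i) = central (lift_period i)"
  by (simp add: prod_eq_iff lift_period_def central_def snd_lift_pow)

lemma lift_pow_div_mod:
  assumes "i < n"
  shows "ext_pow (lift i) r
    = ext_pow (lift i) (r mod p ^ m i) \<odot> central (natmul (r div p ^ m i) (lift_period i))"
proof -
  have "ext_pow (lift i) r = ext_pow (lift i) (r mod p ^ m i + p ^ m i * (r div p ^ m i))"
    by simp
  also have "\<dots> = ext_pow (lift i) (r mod p ^ m i) \<odot> ext_pow (ext_pow (lift i) (p ^ m i)) (r div p ^ m i)"
    using assms by (simp add: ext_pow_add ext_pow_mult)
  finally show ?thesis
    using assms by (simp add: lift_pow_order ext_pow_central)
qed

definition lift_comm :: "nat \<Rightarrow> nat \<Rightarrow> 'a" where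
  "lift_comm i j = fst (lift j \<odot> lift i) - fst (lift i \<odot> lift j)"

lemma lift_commute: "i < n \<Longrightarrow> j < n \<Longrightarrow> lift j \<odot> lift i = lift i \<odot> lift j \<odot> central (lift_comm i j)"
  unfolding lift_comm_def by (rule eq_mul_central) (simp_all add: gmul_comm)

text \<open>The commutator of \<open>lift i\<close> with any element is killed by the order of \<open>lift i\<close> in \<open>G\<close>,
  since the corresponding power of \<open>lift i\<close> is central.\<close>

lemma natmul_lift_comm: "i < n \<Longrightarrow> j < n \<Longrightarrow> natmul (p ^ m i) (lift_comm i j) = 0"
proof -
  assume i: "i < n" and j: "j < n"
  let ?P = "ext_pow (lift i) (p ^ m i)"
  have "lift j \<odot> ?P = ?P \<odot> lift j \<odot> central (natmul (p ^ m i) (lift_comm i j))"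
    using i j by (intro commutator_pow_right lift_commute) simp_all
  moreover have "lift j \<odot> ?P = ?P \<odot> lift j"
    using i j by (simp add: lift_pow_order central_commute)
  ultimately show ?thesis
    by (intro mul_central_eq_self[of "?P \<odot> lift j"]) simp_all
qed

fun lift_prod :: "nat \<Rightarrow> (nat \<Rightarrow> nat) \<Rightarrow> 'a \<times> (nat \<Rightarrow> nat)" where
  "lift_prod 0 s = central 0"
| "lift_prod (Suc k) s = lift_prod k s \<odot> ext_pow (lift k) (s k)"

lemma lift_prod_in_E [simp]: "lift_prod k s \<in> E"
  by (cases k) simp_all

lemma snd_lift_prod: "k \<le> n \<Longrightarrow> snd (lift_prod k s) = (\<lambda>j. if j < k then s j mod p ^ m j else 0)"
  by (induction k) (auto simp: central_def snd_lift_pow gmul_def gen_pow_def)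

lemma lift_pow_commute_prod:
  assumes k: "k < n" and "k' \<le> k"
  shows "ext_pow (lift k) r \<odot> lift_prod k' t
    = lift_prod k' t \<odot> ext_pow (lift k) r \<odot> central (\<Sum>i<k'. natmul (t i * r) (lift_comm i k))"
  using assms(2)
proof (induction k')
  case (Suc k')
  let ?U = "ext_pow (lift k) r" and ?S = "lift_prod k' t" and ?L = "ext_pow (lift k') (t k')"
  let ?X = "\<Sum>i<k'. natmul (t i * r) (lift_comm i k)" and ?Y = "natmul (t k' * r) (lift_comm k' k)"
  have k': "k' < n"
    using Suc k by simp
  have "?U \<odot> lift_prod (Suc k') t = ?S \<odot> ?U \<odot> central ?X \<odot> ?L"
    using Suc by (simp add: ext_mul_assoc)
  also have "\<dots> = ?S \<odot> (?U \<odot> ?L) \<odot> central ?X"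
    by (simp add: mul_central_commute ext_mul_assoc)
  also have "?U \<odot> ?L = ?L \<odot> ?U \<odot> central ?Y"
    using commutator_pow[of "lift k" "lift k'" "lift_comm k' k" r "t k'"] lift_commute[OF k' k] k k'
    by (simp add: mult.commute)
  also have "?S \<odot> (?L \<odot> ?U \<odot> central ?Y) \<odot> central ?X = lift_prod (Suc k') t \<odot> ?U \<odot> central (?Y + ?X)"
    by (simp add: ext_mul_assoc mul_central_central)
  finally show ?case
    by (simp add: add.commute)
qed simp

definition prod_defect :: "nat \<Rightarrow> (nat \<Rightarrow> nat) \<Rightarrow> (nat \<Rightarrow> nat) \<Rightarrow> 'a" where
  "prod_defect k s t = (\<Sum>i<k. natmul ((s i + t i) div p ^ m i) (lift_period i))
    + (\<Sum>j<k. \<Sum>i<j. natmul (t i * s j) (lift_comm i j))"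

lemma lift_prod_mul:
  assumes "k \<le> n"
  shows "lift_prod k s \<odot> lift_prod k t = lift_prod k (gm s t) \<odot> central (prod_defect k s t)"
  using assms
proof (induction k)
  case 0
  then show ?case
    by (simp add: prod_defect_def)
next
  case (Suc k)
  then have k: "k < n" and IH: "lift_prod k s \<odot> lift_prod k t = lift_prod k (gm s t) \<odot> central (prod_defect k s t)"
    by simp_all
  let ?Ss = "lift_prod k s" and ?St = "lift_prod k t" and ?Sst = "lift_prod k (gm s t)"
  let ?Ls = "ext_pow (lift k) (s k)" and ?Lt = "ext_pow (lift k) (t k)"
  let ?X = "\<Sum>i<k. natmul (t i * s k) (lift_comm i k)"
  let ?Q = "natmul ((s k + t k) div p ^ m k) (lift_period k)"
  have "lift_prod (Suc k) s \<odot> lift_prod (Suc k) t = ?Ss \<odot> (?Ls \<odot> ?St) \<odot> ?Lt"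
    by (simp add: ext_mul_assoc)
  also have "\<dots> = ?Ss \<odot> ?St \<odot> (?Ls \<odot> ?Lt) \<odot> central ?X"
    using lift_pow_commute_prod[OF k, of k "s k" t]
    by (simp add: ext_mul_assoc mul_central_commute)
  also have "?Ls \<odot> ?Lt = ext_pow (lift k) (gm s t k) \<odot> central ?Q"
    using k by (simp add: ext_pow_add gmul_def lift_pow_div_mod[OF k, of "s k + t k"])
  also have "?Ss \<odot> ?St = ?Sst \<odot> central (prod_defect k s t)"
    by (rule IH)
  also have "?Sst \<odot> central (prod_defect k s t) \<odot> (ext_pow (lift k) (gm s t k) \<odot> central ?Q) \<odot> central ?X
      = lift_prod (Suc k) (gm s t) \<odot> central (prod_defect k s t + ?Q + ?X)"
    by (simp add: mul_central_mul_central mul_central_central)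
  also have "prod_defect k s t + ?Q + ?X = prod_defect (Suc k) s t"
    by (simp add: prod_defect_def algebra_simps)
  finally show ?case .
qed

text \<open>The section \<open>s \<mapsto> lift_prod n s\<close> of \<open>E \<rightarrow> G\<close> shows that \<open>f\<close> differs from
  \<open>prod_defect n\<close>, i.e. from an \<open>alpha\<close>, by the coboundary of its first component.\<close>

lemma cohomologous2_alpha:
  "\<exists>a b. (\<forall>l\<in>Lam n. natmul (p ^ m (fst l)) (b l) = 0) \<and> cohomologous2 n m p f (alpha n m p a b)"
proof (intro exI conjI)
  let ?b = "\<lambda>l. - lift_comm (fst l) (snd l)"
  show "\<forall>l\<in>Lam n. natmul (p ^ m (fst l)) (?b l) = 0"
    by (auto simp: Lam_def natmul_minus_right natmul_lift_comm)
  show "cohomologous2 n m p f (alpha n m p lift_period ?b)"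
    unfolding cohomologous2_def coboundary2_def
  proof (intro exI[of _ "\<lambda>s. - fst (lift_prod n s)"] ballI)
    fix g h assume g: "g \<in> G" and h: "h \<in> G"
    have "snd (lift_prod n g) = g" "snd (lift_prod n h) = h"
      using g h by (auto simp: snd_lift_prod grp_def)
    then have "fst (lift_prod n g) + fst (lift_prod n h) + f g h
        = fst (lift_prod n (gm g h)) + prod_defect n g h"
      using arg_cong[OF lift_prod_mul[of n g h], of fst] by (simp add: fst_ext_mul mul_central)
    moreover have "prod_defect n g h = alpha n m p lift_period ?b g h"
      using g h by (simp add: prod_defect_def alpha_def sum_Lam natmul_minus_right sum_negf)
    ultimately show "f g h - alpha n m p lift_period ?b g h
        = - fst (lift_prod n h) - - fst (lift_prod n (gm g h)) + - fst (lift_prod n g)"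
      by (simp add: algebra_simps)
  qed
qed

end

context cyclic_product
begin

lemma cocycle2_zero_left:
  assumes "cocycle2 n m p f" "k \<in> G"
  shows "f (\<lambda>_. 0) k = f (\<lambda>_. 0) (\<lambda>_. 0)"
proof -
  have "delta2 n m p f (\<lambda>_. 0) (\<lambda>_. 0) k = 0"
    using assms by (simp add: cocycle2_iff_delta2)
  then show ?thesis
    using assms(2) by (simp add: delta2_def)
qed

lemma cocycle2_zero_right:
  assumes "cocycle2 n m p f" "g \<in> G"
  shows "f g (\<lambda>_. 0) = f (\<lambda>_. 0) (\<lambda>_. 0)"
proof -
  have "delta2 n m p f g (\<lambda>_. 0) (\<lambda>_. 0) = 0"
    using assms by (simp add: cocycle2_iff_delta2)
  then show ?thesis
    using assms(2) by (simp add: delta2_def)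
qed

lemma cocycle2_cohomologous_alpha:
  assumes f: "cocycle2 n m p f"
  shows "\<exists>a b. (\<forall>l\<in>Lam n. natmul (p ^ m (fst l)) (b l) = 0) \<and> cohomologous2 n m p f (alpha n m p a b)"
proof -
  define c where "c = f (\<lambda>_. 0) (\<lambda>_. 0)"
  have "cocycle2 n m p (\<lambda>s t. f s t - c)"
    using f by (intro cocycle2_diff) (simp_all add: cocycle2_def)
  moreover have "f (\<lambda>_. 0) k - c = 0" if "k \<in> G" for k
    using cocycle2_zero_left[OF f that] by (simp add: c_def)
  moreover have "f g (\<lambda>_. 0) - c = 0" if "g \<in> G" for g
    using cocycle2_zero_right[OF f that] by (simp add: c_def)
  ultimately interpret normalized_cocycle n m p "\<lambda>s t. f s t - c"
    by unfold_locales
  obtain a b where b: "\<forall>l\<in>Lam n. natmul (p ^ m (fst l)) (b l) = 0"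
    and "coboundary2 n m p (\<lambda>s t. f s t - c - alpha n m p a b s t)"
    using cohomologous2_alpha unfolding cohomologous2_def by blast
  then have "coboundary2 n m p (\<lambda>s t. (f s t - c - alpha n m p a b s t) + c)"
    by (intro coboundary2_add coboundary2_const)
  then have "cohomologous2 n m p f (alpha n m p a b)"
    by (simp add: cohomologous2_def)
  with b show ?thesis
    by blast
qed

end

theorem lemma2p1:
  fixes p n :: nat and m :: "nat \<Rightarrow> nat"
  assumes "prime p"
    and "\<forall>i<n. 1 \<le> m i"
    and "\<forall>i j. i \<le> j \<and> j < n \<longrightarrow> m i \<le> m j"
    and "\<forall>x::'a::{ab_group_add,finite}. \<exists>k. natmul (p ^ k) x = 0"
  shows
    "(\<forall>(a::nat \<Rightarrow> 'a) b. (\<forall>l\<in>Lam n. natmul (p ^ m (fst l)) (b l) = 0)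
        \<longrightarrow> cocycle2 n m p (alpha n m p a b))
   \<and> (\<forall>f :: (nat \<Rightarrow> nat) \<Rightarrow> (nat \<Rightarrow> nat) \<Rightarrow> 'a. cocycle2 n m p f \<longrightarrow>
        (\<exists>a b. (\<forall>l\<in>Lam n. natmul (p ^ m (fst l)) (b l) = 0)
              \<and> cohomologous2 n m p f (alpha n m p a b)))
   \<and> (\<forall>(a::nat \<Rightarrow> 'a) b. (\<forall>l\<in>Lam n. natmul (p ^ m (fst l)) (b l) = 0)
        \<longrightarrow> (coboundary2 n m p (alpha n m p a b) \<longleftrightarrow>
              (\<forall>i<n. \<exists>x. a i = natmul (p ^ m i) x) \<and> (\<forall>l\<in>Lam n. b l = 0)))
   \<and> (\<forall>(a::nat \<Rightarrow> 'a) b a' b'. (\<forall>l\<in>Lam n. natmul (p ^ m (fst l)) (b l) = 0)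
        \<and> (\<forall>l\<in>Lam n. natmul (p ^ m (fst l)) (b' l) = 0)
        \<longrightarrow> (cohomologous2 n m p (alpha n m p a b) (alpha n m p a' b') \<longleftrightarrow>
              (\<forall>i<n. \<exists>x. a i - a' i = natmul (p ^ m i) x) \<and> (\<forall>l\<in>Lam n. b l = b' l)))
   \<and> (\<forall>(a::nat \<Rightarrow> 'a) b a' b'. \<forall>s\<in>grp n m p. \<forall>t\<in>grp n m p.
        alpha n m p (\<lambda>i. a i + a' i) (\<lambda>l. b l + b' l) s t = alpha n m p a b s t + alpha n m p a' b' s t)"
proof -
  interpret cyclic_product n m p
  proof
    fix i assume "i < n"
    with assms(2) show "1 < p ^ m i"
      by (intro one_less_power prime_gt_1_nat[OF assms(1)]) auto
  qed
  have mono: "\<And>i j. i \<le> j \<Longrightarrow> j < n \<Longrightarrow> m i \<le> m j"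
    using assms(3) by blast
  show ?thesis
  proof (intro conjI allI impI)
    fix a :: "nat \<Rightarrow> 'a" and b :: "nat \<times> nat \<Rightarrow> 'a"
    assume "\<forall>l\<in>Lam n. natmul (p ^ m (fst l)) (b l) = 0"
    then show "cocycle2 n m p (alpha n m p a b)"
      by (intro cocycle2_alpha[OF mono]) auto
  qed (simp_all add: cocycle2_cohomologous_alpha coboundary2_alpha_iff cohomologous2_alpha_iff alpha_add)
qed

end
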